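(* For every integer $r>0$ and every integer $n\ge 1$, \[B_{n-1,r}\,B_{n+1,r}\ge B_{n,r}^2.\]
   Context: For integers $n\ge k\ge r\ge 0$, the $r$-Stirling number of the second kind $\genfrac\{\}{0pt}{}{n}{k}_r$ is the number of partitions of the set $\{1,2,\dots,n\}$ into $k$ nonempty, pairwise disjoint subsets such that the elements $1,\dots,r$ lie in distinct subsets (it is taken to be $0$ when $k>n$). The $r$-Bell numbers are $B_{n,r}=\sum_{k=0}^n\genfrac\{\}{0pt}{}{n+r}{k+r}_r$, i.e. the number of partitions of a set of $n+r$ elements in which $r$ specified elements lie in distinct blocks. *)

theory Defs
  imports Main "HOL-Library.Disjoint_Sets"
begin

definition r_stirling :: "nat \<Rightarrow> nat \<Rightarrow> nat \<Rightarrow> nat" where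
  "r_stirling n k r = card {P. partition_on {1..n} P \<and> card P = k \<and>
      (\<forall>B\<in>P. \<forall>i\<in>{1..r}. \<forall>j\<in>{1..r}. i \<in> B \<and> j \<in> B \<longrightarrow> i = j)}"

definition r_bell :: "nat \<Rightarrow> nat \<Rightarrow> nat" where
  "r_bell n r = (\<Sum>k=0..n. r_stirling (n + r) (k + r) r)"

end

(*
  Removing the largest element n+1 from a partition of {1..n+1} whose first r elements lie in
  distinct blocks either deletes a singleton block or shrinks one of the k blocks, which gives the
  recurrence S_r(n+1,k) = k S_r(n,k) + S_r(n,k-1). It is equivalent to the expansion
  (x+r)^n = \<Sum>_k S_r(n+r,k+r) x^(k) in falling factorials x^(k), and since \<Sum>_j j^(k)/j! = e for
  every k, it yields Dobinski's formula e B_{n,r} = \<Sum>_j (j+r)^n/j!. Thus e B_{n-1,r}, e B_{n,r},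
  e B_{n+1,r} are the weighted sums of 1, y_j and y_j^2 for the weights (j+r)^(n-1)/j! and
  y_j = j+r, and the Cauchy-Schwarz inequality gives B_{n,r}^2 \<le> B_{n-1,r} B_{n+1,r}.
*)
theory Submission
  imports Defs "HOL-Analysis.Convex"
begin

definition separates :: "'a set \<Rightarrow> 'a set set \<Rightarrow> bool" where
  "separates S P \<longleftrightarrow> (\<forall>B\<in>P. \<forall>i\<in>S. \<forall>j\<in>S. i \<in> B \<and> j \<in> B \<longrightarrow> i = j)"

definition separated_partitions :: "'a set \<Rightarrow> 'a set \<Rightarrow> nat \<Rightarrow> 'a set set set" where
  "separated_partitions A S k = {P. partition_on A P \<and> card P = k \<and> separates S P}"

lemma r_stirling_eq_card_separated_partitions:
  "r_stirling n k r = card (separated_partitions {1..n} {1..r} k)"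
  by (simp add: r_stirling_def separated_partitions_def separates_def)

lemma finite_separated_partitions: "finite A \<Longrightarrow> finite (separated_partitions A S k)"
  by (rule finite_subset[OF _ finitely_many_partition_on]) (auto simp: separated_partitions_def)

lemma partition_on_remove_block:
  assumes "partition_on A P" "B \<in> P"
  shows "partition_on (A - B) (P - {B})"
proof -
  have "disjnt B (\<Union>(P - {B}))"
    using partition_onD2[OF assms(1)] assms(2) by (auto simp: disjnt_def disjoint_def)
  then show ?thesis
    using partition_on_insert[of B "P - {B}" A] assms by (simp add: insert_absorb)
qed

definition insert_into_block :: "'a \<Rightarrow> 'a set set \<Rightarrow> 'a set \<Rightarrow> 'a set set" where
  "insert_into_block a Q B = insert (insert a B) (Q - {B})"

lemma partition_on_insert_into_block:
  assumes "partition_on A Q" "B \<in> Q" "a \<notin> A"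
  shows "partition_on (insert a A) (insert_into_block a Q B)"
proof -
  have disj: "disjnt (insert a B) (\<Union>(Q - {B}))"
    using partition_onD1[OF assms(1)] partition_onD2[OF assms(1)] assms(2,3)
    by (auto simp: disjnt_def disjoint_def)
  moreover have "insert a A - insert a B = A - B" "insert a B \<subseteq> insert a A"
    using assms(2,3) partition_onD1[OF assms(1)] by blast+
  ultimately show ?thesis
    using partition_on_remove_block[OF assms(1,2)]
    unfolding insert_into_block_def partition_on_insert[OF disj] by simp
qed

lemma partition_on_delete_from_block:
  assumes "partition_on (insert a A) P" "C \<in> P" "a \<in> C" "C \<noteq> {a}" "a \<notin> A"
  shows "partition_on A (insert (C - {a}) (P - {C}))"
proof -
  have disj: "disjnt (C - {a}) (\<Union>(P - {C}))"
    using partition_onD2[OF assms(1)] assms(2) by (auto simp: disjnt_def disjoint_def)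
  moreover have "A - (C - {a}) = insert a A - C" using assms(3,5) by blast
  moreover have "C - {a} \<subseteq> A" "C - {a} \<noteq> {}"
    using partition_onD1[OF assms(1)] assms(2-5) by auto
  ultimately show ?thesis
    using partition_on_remove_block[OF assms(1,2)] unfolding partition_on_insert[OF disj] by simp
qed

lemma card_partition_on_le:
  assumes "finite A" "partition_on A P"
  shows "card P \<le> card A"
proof -
  have fin: "finite B" "B \<noteq> {}" if "B \<in> P" for B
    using assms that by (auto simp: partition_on_def intro: rev_finite_subset)
  have "card P = (\<Sum>B\<in>P. 1)" by simp
  also have "\<dots> \<le> (\<Sum>B\<in>P. card B)"
    using fin by (intro sum_mono) (simp add: Suc_leI card_gt_0_iff)
  also have "\<dots> = card A"
    using card_Union_disjoint[OF partition_onD2[OF assms(2)]] fin partition_onD1[OF assms(2)]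
    by (simp add: disjoint_def pairwise_def disjnt_def)
  finally show ?thesis .
qed

lemma card_le_if_separates:
  assumes "finite P" "S \<subseteq> \<Union>P" "separates S P"
  shows "card S \<le> card P"
proof -
  have le1: "card (B \<inter> S) \<le> 1" if "B \<in> P" for B
  proof (cases "finite (B \<inter> S)")
    case True
    then show ?thesis using assms(3) that by (auto simp: card_le_Suc0_iff_eq separates_def)
  qed simp
  have "card S = card (\<Union>B\<in>P. B \<inter> S)"
    using assms(2) by (metis Int_commute Int_absorb1 Int_Union2)
  also have "\<dots> \<le> (\<Sum>B\<in>P. card (B \<inter> S))" by (rule card_UN_le[OF assms(1)])
  also have "\<dots> \<le> (\<Sum>B\<in>P. 1)" using le1 by (rule sum_mono)
  finally show ?thesis by simp
qed

lemma separating_partition_on_self: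
  assumes "partition_on S P" "separates S P"
  shows "P = (\<lambda>i. {i}) ` S"
proof -
  have singleton: "\<exists>i\<in>S. B = {i}" if "B \<in> P" for B
  proof -
    obtain i where "i \<in> B" using partition_onD3[OF assms(1)] \<open>B \<in> P\<close> by (metis ex_in_conv)
    moreover have "B \<subseteq> S" using partition_onD1[OF assms(1)] that by blast
    ultimately show ?thesis using assms(2) that unfolding separates_def by blast
  qed
  show ?thesis
  proof
    show "P \<subseteq> (\<lambda>i. {i}) ` S" using singleton by blast
    show "(\<lambda>i. {i}) ` S \<subseteq> P"
      using singleton partition_onD1[OF assms(1)] by fastforce
  qed
qed

lemma card_separated_partitions_singleton_block:
  assumes "finite A" "a \<notin> A"
  shows "card {P \<in> separated_partitions (insert a A) S (Suc k). {a} \<in> P}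
           = card (separated_partitions A S k)"
proof -
  have add: "insert {a} Q \<in> separated_partitions (insert a A) S (Suc k)"
    if Q: "Q \<in> separated_partitions A S k" for Q
  proof -
    have "partition_on A Q" "finite Q" "{a} \<notin> Q" "disjnt {a} (\<Union>Q)"
      using Q assms finite_elements by (auto simp: separated_partitions_def partition_on_def)
    moreover have "partition_on (insert a A) (insert {a} Q)"
      using calculation assms(2) by (subst partition_on_insert) auto
    ultimately show ?thesis
      using Q by (auto simp: separated_partitions_def separates_def)
  qed
  have remove: "P - {{a}} \<in> separated_partitions A S k"
    if P: "P \<in> separated_partitions (insert a A) S (Suc k)" "{a} \<in> P" for P
  proof -
    have "finite P" using P by (auto simp: separated_partitions_def intro: card_ge_0_finite)
    then show ?thesis
      using P partition_on_remove_block[of "insert a A" P "{a}"] assms(2)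
      by (auto simp: separated_partitions_def separates_def)
  qed
  have "bij_betw (insert {a}) (separated_partitions A S k)
          {P \<in> separated_partitions (insert a A) S (Suc k). {a} \<in> P}"
  proof (rule bij_betw_byWitness[where f' = "\<lambda>P. P - {{a}}"])
    show "\<forall>Q\<in>separated_partitions A S k. insert {a} Q - {{a}} = Q"
      using assms(2) by (auto simp: separated_partitions_def partition_on_def)
  qed (use add remove in \<open>auto simp: insert_absorb\<close>)
  then show ?thesis by (simp add: bij_betw_same_card)
qed

lemma insert_into_block_inj:
  assumes "a \<notin> \<Union>Q" "a \<notin> \<Union>Q'" "B \<in> Q" "B' \<in> Q'"
    and eq: "insert_into_block a Q B = insert_into_block a Q' B'"
  shows "Q = Q' \<and> B = B'"
proof -
  have "insert a B \<in> insert (insert a B') (Q' - {B'})"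
    using eq by (auto simp: insert_into_block_def)
  then have "insert a B = insert a B'" using assms(2) by blast
  then have B: "B = B'" using assms(1-4) by (metis UnionI insert_ident)
  have "insert a B \<notin> Q - {B}" "insert a B \<notin> Q' - {B}" using assms(1,2) by auto
  then have "Q - {B} = Q' - {B}"
    using eq unfolding B insert_into_block_def by (simp add: insert_ident)
  then show ?thesis using assms(3,4) B by (metis insert_Diff)
qed

lemma insert_into_block_separated_partitions:
  assumes "finite A" "a \<notin> A" "a \<notin> S" "Q \<in> separated_partitions A S k" "B \<in> Q"
  shows "insert_into_block a Q B \<in> separated_partitions (insert a A) S k"
    and "{a} \<notin> insert_into_block a Q B"
proof -
  have Q: "partition_on A Q" "card Q = k" "separates S Q" "finite Q"
    using assms(1,4) finite_elements by (auto simp: separated_partitions_def)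
  have "a \<notin> \<Union>Q" using Q(1) assms(2) by (auto dest: partition_onD1)
  then have "a \<notin> B" "B \<noteq> {}" "insert a B \<notin> Q - {B}" "{a} \<notin> Q"
    using assms(5) Q(1) by (auto simp: partition_on_def)
  moreover have "0 < k" using Q(2,4) assms(5) card_gt_0_iff by blast
  ultimately have "card (insert_into_block a Q B) = k"
    using Q(2,4) assms(5) by (simp add: insert_into_block_def card_Diff_singleton)
  moreover have "separates S (insert_into_block a Q B)"
    using Q(3) assms(3,5) by (auto simp: separates_def insert_into_block_def)
  ultimately show "insert_into_block a Q B \<in> separated_partitions (insert a A) S k"
    using partition_on_insert_into_block[OF Q(1) assms(5,2)]
    by (simp add: separated_partitions_def)
  show "{a} \<notin> insert_into_block a Q B"
    using \<open>a \<notin> B\<close> \<open>B \<noteq> {}\<close> \<open>{a} \<notin> Q\<close> by (auto simp: insert_into_block_def)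
qed

lemma separated_partitions_obtain_insert_into_block:
  assumes "finite A" "a \<notin> A" "P \<in> separated_partitions (insert a A) S k" "{a} \<notin> P"
  obtains Q B where "Q \<in> separated_partitions A S k" "B \<in> Q" "P = insert_into_block a Q B"
proof -
  have part: "partition_on (insert a A) P" "card P = k" "separates S P" "finite P"
    using assms(1,3) finite_elements[of "insert a A"] by (auto simp: separated_partitions_def)
  obtain C where C: "C \<in> P" "a \<in> C" using partition_onD1[OF part(1)] by blast
  define B where "B = C - {a}"
  have "C \<noteq> {a}" using C assms(4) by blast
  then have "B \<noteq> {}" "B \<subseteq> C" "B \<noteq> C" using C by (auto simp: B_def)
  then have "B \<notin> P" using C(1) partition_onD2[OF part(1)] by (auto simp: disjoint_def)
  moreover have "0 < k" using part(2,4) C(1) card_gt_0_iff by blast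
  ultimately have "card (insert B (P - {C})) = k"
    using part(2,4) C(1) by (simp add: card_Diff_singleton)
  moreover have "partition_on A (insert B (P - {C}))"
    using partition_on_delete_from_block[OF part(1) C \<open>C \<noteq> {a}\<close> assms(2)]
    by (simp add: B_def)
  moreover have "separates S (insert B (P - {C}))"
    using part(3) C(1) \<open>B \<subseteq> C\<close> by (auto simp: separates_def)
  moreover have "P = insert_into_block a (insert B (P - {C})) B"
    using C \<open>B \<notin> P\<close> by (auto simp: insert_into_block_def B_def insert_absorb)
  ultimately show ?thesis
    using that[of "insert B (P - {C})" B] by (simp add: separated_partitions_def)
qed

lemma card_separated_partitions_nonsingleton_block:
  assumes "finite A" "a \<notin> A" "a \<notin> S"
  shows "card {P \<in> separated_partitions (insert a A) S k. {a} \<notin> P}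
           = k * card (separated_partitions A S k)"
proof -
  let ?X = "SIGMA Q:separated_partitions A S k. Q"
  have "card ?X = (\<Sum>Q\<in>separated_partitions A S k. card Q)"
    using finite_separated_partitions[OF assms(1)] assms(1) finite_elements
    by (intro card_SigmaI) (auto simp: separated_partitions_def)
  then have card_X: "card ?X = k * card (separated_partitions A S k)"
    by (simp add: separated_partitions_def)
  have "inj_on (\<lambda>(Q, B). insert_into_block a Q B) ?X"
  proof (rule inj_onI, clarify)
    fix Q B Q' B'
    assume "Q \<in> separated_partitions A S k" "B \<in> Q" "Q' \<in> separated_partitions A S k" "B' \<in> Q'"
      and "insert_into_block a Q B = insert_into_block a Q' B'"
    moreover from calculation have "a \<notin> \<Union>Q" "a \<notin> \<Union>Q'"
      using assms(2) by (auto simp: separated_partitions_def dest: partition_onD1)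
    ultimately show "Q = Q' \<and> B = B'" by (intro insert_into_block_inj)
  qed
  moreover have "(\<lambda>(Q, B). insert_into_block a Q B) ` ?X
      \<subseteq> {P \<in> separated_partitions (insert a A) S k. {a} \<notin> P}"
    using insert_into_block_separated_partitions[OF assms] by auto
  moreover have "{P \<in> separated_partitions (insert a A) S k. {a} \<notin> P}
      \<subseteq> (\<lambda>(Q, B). insert_into_block a Q B) ` ?X"
  proof clarify
    fix P assume "P \<in> separated_partitions (insert a A) S k" "{a} \<notin> P"
    then obtain Q B where "Q \<in> separated_partitions A S k" "B \<in> Q" "P = insert_into_block a Q B"
      by (rule separated_partitions_obtain_insert_into_block[OF assms(1,2)])
    then show "P \<in> (\<lambda>(Q, B). insert_into_block a Q B) ` ?X" by force
  qed
  ultimately show ?thesis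
    using card_X card_image by (metis (no_types, lifting) subset_antisym)
qed

lemma card_separated_partitions_insert:
  assumes "finite A" "a \<notin> A" "a \<notin> S"
  shows "card (separated_partitions (insert a A) S (Suc k))
           = Suc k * card (separated_partitions A S (Suc k)) + card (separated_partitions A S k)"
proof -
  let ?P = "separated_partitions (insert a A) S (Suc k)"
  have "card ?P = card {P \<in> ?P. {a} \<in> P} + card {P \<in> ?P. {a} \<notin> P}"
    using card_Int_Diff[of ?P "{P. {a} \<in> P}"] finite_separated_partitions[of "insert a A"] assms(1)
    by (simp add: Int_def set_diff_eq)
  then show ?thesis
    using card_separated_partitions_singleton_block[OF assms(1,2)]
      card_separated_partitions_nonsingleton_block[OF assms] by simp
qed

lemma r_stirling_Suc:
  assumes "r \<le> m"
  shows "r_stirling (Suc m) (Suc k) r = Suc k * r_stirling m (Suc k) r + r_stirling m k r"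
proof -
  have "{1..Suc m} = insert (Suc m) {1..m}" by auto
  then show ?thesis
    using card_separated_partitions_insert[of "{1..m}" "Suc m" "{1..r}" k] assms
    by (simp add: r_stirling_eq_card_separated_partitions)
qed

lemma r_stirling_eq_0_if_less:
  assumes "r \<le> m" "k < r"
  shows "r_stirling m k r = 0"
proof -
  have lower: "r \<le> card P" if "partition_on {1..m} P" "separates {1..r} P" for P
  proof -
    have "{1..r} \<subseteq> \<Union>P" using partition_onD1[OF that(1)] assms(1) by auto
    then show ?thesis
      using card_le_if_separates[of P "{1..r}"] finite_elements[OF _ that(1)] that(2) by simp
  qed
  have "separated_partitions {1..m} {1..r} k = {}"
  proof (rule equals0I)
    fix P assume "P \<in> separated_partitions {1..m} {1..r} k"
    then show False using lower[of P] assms(2) by (simp add: separated_partitions_def)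
  qed
  then show ?thesis by (simp add: r_stirling_eq_card_separated_partitions)
qed

lemma r_stirling_eq_0_if_greater:
  assumes "m < k"
  shows "r_stirling m k r = 0"
proof -
  have "separated_partitions {1..m} {1..r} k = {}"
    using card_partition_on_le[of "{1..m}"] assms by (fastforce simp: separated_partitions_def)
  then show ?thesis by (simp add: r_stirling_eq_card_separated_partitions)
qed

lemma r_stirling_self: "r_stirling r r r = 1"
proof -
  have "card ((\<lambda>i. {i}) ` {1..r}) = r" by (simp add: card_image)
  then have "separated_partitions {1..r} {1..r} r = {(\<lambda>i. {i}) ` {1..r}}"
    using separating_partition_on_self partition_on_singletons
    by (auto simp: separated_partitions_def separates_def)
  then show ?thesis by (simp add: r_stirling_eq_card_separated_partitions)
qed

definition falling_factorial :: "real \<Rightarrow> nat \<Rightarrow> real" where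
  "falling_factorial x k = (\<Prod>i<k. x - real i)"

lemma falling_factorial_0 [simp]: "falling_factorial x 0 = 1"
  by (simp add: falling_factorial_def)

lemma falling_factorial_Suc: "falling_factorial x (Suc k) = falling_factorial x k * (x - real k)"
  by (simp add: falling_factorial_def)

lemma falling_factorial_of_nat:
  "falling_factorial (real m) k = (if k \<le> m then fact m / fact (m - k) else 0)"
proof (induction k)
  case (Suc k)
  show ?case
  proof (cases "Suc k \<le> m")
    case True
    then have "falling_factorial (real m) (Suc k) = fact m / fact (m - k) * real (m - k)"
      using Suc by (simp add: falling_factorial_Suc of_nat_diff)
    also have "\<dots> = fact m / fact (m - Suc k)"
    proof -
      have "m - k = Suc (m - Suc k)" using True by simp
      then show ?thesis by (simp add: field_simps del: of_nat_Suc)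
    qed
    finally show ?thesis using True by simp
  next
    case False
    then show ?thesis using Suc by (simp add: falling_factorial_Suc)
  qed
qed simp

lemma sums_falling_factorial_over_fact:
  "(\<lambda>j. falling_factorial (real j) k / fact j) sums exp 1"
proof -
  have "(\<lambda>j. 1 / fact j :: real) sums exp 1"
    using exp_converges[of "1::real"] by (simp add: divide_inverse)
  also have "(\<lambda>j. 1 / fact j :: real) = (\<lambda>j. falling_factorial (real (j + k)) k / fact (j + k))"
    by (simp add: falling_factorial_of_nat del: of_nat_add)
  \<comment> \<open>the terms with \<open>j < k\<close> vanish, so the shift by \<open>k\<close> does not change the sum\<close>
  finally show ?thesis
    by (subst (asm) sums_zero_iff_shift) (simp_all add: falling_factorial_of_nat)
qed

lemma power_eq_sum_r_stirling_falling_factorial: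
  assumes "0 < r"
  shows "(x + real r) ^ n = (\<Sum>k\<le>n. real (r_stirling (n + r) (k + r) r) * falling_factorial x k)"
proof (induction n)
  case 0
  show ?case by (simp add: r_stirling_self)
next
  case (Suc n)
  define c where "c m k = real (r_stirling (m + r) (k + r) r)" for m k
  define f where "f k = falling_factorial x k" for k
  have c_Suc: "c (Suc n) (Suc k) = (real (Suc k) + real r) * c n (Suc k) + c n k" for k
    using r_stirling_Suc[of r "n + r" "k + r"] by (simp add: c_def algebra_simps)
  have c_0: "c (Suc n) 0 = real r * c n 0"
  proof -
    obtain q where q: "r = Suc q" using assms by (cases r) auto
    then show ?thesis
      using r_stirling_Suc[of r "n + r" q] r_stirling_eq_0_if_less[of r "n + r" q]
      by (simp add: c_def algebra_simps)
  qed
  have "(\<Sum>k\<le>n. (real k + real r) * c n k * f k) = (\<Sum>k\<le>Suc n. (real k + real r) * c n k * f k)"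
    using r_stirling_eq_0_if_greater[of "n + r" "Suc n + r" r] by (simp add: c_def)
  also have "\<dots> = real r * c n 0 + (\<Sum>k\<le>n. (real (Suc k) + real r) * c n (Suc k) * f (Suc k))"
    unfolding sum.atMost_Suc_shift by (simp add: f_def)
  finally have shifted: "(\<Sum>k\<le>n. (real k + real r) * c n k * f k)
      = real r * c n 0 + (\<Sum>k\<le>n. (real (Suc k) + real r) * c n (Suc k) * f (Suc k))" .
  have "(x + real r) ^ Suc n = (\<Sum>k\<le>n. c n k * ((x + real r) * f k))"
    using Suc.IH by (simp add: c_def f_def sum_distrib_left algebra_simps)
  also have "\<dots> = (\<Sum>k\<le>n. c n k * f (Suc k)) + (\<Sum>k\<le>n. (real k + real r) * c n k * f k)"
    by (simp add: f_def falling_factorial_Suc sum.distrib[symmetric] algebra_simps)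
  also have "\<dots> = c (Suc n) 0 * f 0 + (\<Sum>k\<le>n. c (Suc n) (Suc k) * f (Suc k))"
    unfolding shifted c_Suc c_0 by (simp add: f_def sum.distrib algebra_simps)
  also have "\<dots> = (\<Sum>k\<le>Suc n. c (Suc n) k * f k)"
    by (simp only: sum.atMost_Suc_shift)
  finally show ?case by (simp add: c_def f_def)
qed

lemma sums_r_bell:
  assumes "0 < r"
  shows "(\<lambda>j. (real j + real r) ^ n / fact j) sums (exp 1 * real (r_bell n r))"
proof -
  define c where "c k = real (r_stirling (n + r) (k + r) r)" for k
  have "(\<lambda>j. \<Sum>k\<le>n. c k * (falling_factorial (real j) k / fact j)) sums (\<Sum>k\<le>n. c k * exp 1)"
    by (intro sums_sum sums_mult sums_falling_factorial_over_fact)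
  moreover have "(\<Sum>k\<le>n. c k * (falling_factorial (real j) k / fact j)) = (real j + real r) ^ n / fact j"
    for j
    using power_eq_sum_r_stirling_falling_factorial[OF assms, of "real j" n]
    by (simp add: c_def sum_divide_distrib)
  moreover have "(\<Sum>k\<le>n. c k * exp 1) = exp 1 * real (r_bell n r)"
    by (simp add: c_def r_bell_def atLeast0AtMost sum_distrib_left mult.commute)
  ultimately show ?thesis by simp
qed

lemma sums_Cauchy_Schwarz:
  fixes w y :: "nat \<Rightarrow> real"
  assumes "\<And>j. 0 \<le> w j" "w sums U" "(\<lambda>j. w j * y j) sums W" "(\<lambda>j. w j * (y j)\<^sup>2) sums V"
  shows "W\<^sup>2 \<le> U * V"
proof (rule LIMSEQ_le)
  show "(\<lambda>N. (\<Sum>j<N. w j * y j)\<^sup>2) \<longlonglongrightarrow> W\<^sup>2"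
    using assms(3) unfolding sums_def by (rule tendsto_power)
  show "(\<lambda>N. (\<Sum>j<N. w j) * (\<Sum>j<N. w j * (y j)\<^sup>2)) \<longlonglongrightarrow> U * V"
    using assms(2,4) unfolding sums_def by (rule tendsto_mult)
  have "(\<Sum>j<N. w j * y j)\<^sup>2 \<le> (\<Sum>j<N. w j) * (\<Sum>j<N. w j * (y j)\<^sup>2)" for N
    using Cauchy_Schwarz_ineq_sum[of "\<lambda>j. sqrt (w j)" "\<lambda>j. sqrt (w j) * y j" "{..<N}"] assms(1)
    by (simp add: power_mult_distrib mult.assoc[symmetric])
  then show "\<exists>N. \<forall>n\<ge>N. (\<Sum>j<n. w j * y j)\<^sup>2 \<le> (\<Sum>j<n. w j) * (\<Sum>j<n. w j * (y j)\<^sup>2)"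
    by blast
qed

theorem mainTheorem6:
  fixes n r :: nat
  assumes "r > 0" and "n \<ge> 1"
  shows "r_bell (n - 1) r * r_bell (n + 1) r \<ge> (r_bell n r)\<^sup>2"
proof -
  obtain p where n: "n = Suc p" using assms(2) by (cases n) auto
  define w where "w = (\<lambda>j. (real j + real r) ^ p / fact j)"
  have "w j * (real j + real r) = (real j + real r) ^ n / fact j"
    "w j * (real j + real r)\<^sup>2 = (real j + real r) ^ (n + 1) / fact j" for j
    by (simp_all add: n w_def power2_eq_square)
  then have "(\<lambda>j. w j * (real j + real r)) sums (exp 1 * real (r_bell n r))"
    "(\<lambda>j. w j * (real j + real r)\<^sup>2) sums (exp 1 * real (r_bell (n + 1) r))"
    using sums_r_bell[OF assms(1)] by (simp_all del: power_Suc)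
  moreover have "w sums (exp 1 * real (r_bell (n - 1) r))"
    using sums_r_bell[OF assms(1), of p] by (simp add: n w_def)
  ultimately have "(exp 1 * real (r_bell n r))\<^sup>2
      \<le> (exp 1 * real (r_bell (n - 1) r)) * (exp 1 * real (r_bell (n + 1) r))"
    by (intro sums_Cauchy_Schwarz[of w]) (simp_all add: w_def)
  then have "(exp 1)\<^sup>2 * real ((r_bell n r)\<^sup>2) \<le> (exp 1)\<^sup>2 * real (r_bell (n - 1) r * r_bell (n + 1) r)"
    by (simp add: power_mult_distrib power2_eq_square algebra_simps)
  then have "real ((r_bell n r)\<^sup>2) \<le> real (r_bell (n - 1) r * r_bell (n + 1) r)"
    by (rule mult_left_le_imp_le) simp
  then show ?thesis by (simp only: of_nat_le_iff)
qed

end
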